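(* Let $E$ be a Banach sequence lattice on which all shifts $\tau_n$, $n\in\mathbb Z$, are bounded and such that $k_-(E)<1$, and let $X$ be a symmetric sequence space such that, for real sequences $a$, $a\in X$ if and only if $\sum_{k=0}^\infty a^*_{2^k}e_{k+1}\in E$, and $\|a\|_X\asymp\|\sum_{k=0}^\infty a^*_{2^k}e_{k+1}\|_E$ with constants independent of $a$. Then $E_X=E$ as sets, with equivalent norms.
   Context: A Banach sequence lattice is a Banach space $E$ of real sequences such that $x\in E$, $|y_k|\le|x_k|$ imply $y\in E$, $\|y\|_E\le\|x\|_E$. $u^*$ is the nonincreasing rearrangement of $(|u_k|)$. A symmetric sequence space is a Banach sequence lattice $X\subset\ell^\infty$ such that $x\in X$, $y^*=x^*$ imply $y\in X$, $\|y\|_X=\|x\|_X$; standing assumption: $X$ is separable or has the Fatou property. $\tau_nx=(x_{k-n})_{k\ge1}$ with $x_j:=0$ for $j\notin\mathbb N$; $k_-(E)=\lim_{n\to\infty}\|\tau_{-n}\|_E^{1/n}$. $f\asymp g$ means $cf\le g\le Cf$ for constants $c,C>0$. $E_X$ is the Banach sequence lattice of real sequences $a$ with $\|a\|_{E_X}:=\|\sum_{k=1}^\infty a_k\sum_{i=2^{k-1}}^{2^k-1}e_i\|_X<\infty$. *)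

theory Defs
  imports Complex_Main "HOL-Library.Countable_Set"
begin

text \<open>Real sequences (x_k)_{k>=1} are represented as functions nat => real,
  with the convention that the (meaningless) coordinate 0 is 0.\<close>

definition seqs :: "(nat \<Rightarrow> real) set" where
  "seqs = {x. x 0 = 0}"

definition is_banach_seq_lattice :: "(nat \<Rightarrow> real) set \<Rightarrow> ((nat \<Rightarrow> real) \<Rightarrow> real) \<Rightarrow> bool" where
  "is_banach_seq_lattice E N \<longleftrightarrow>
     E \<subseteq> seqs \<and>
     (\<lambda>k. 0) \<in> E \<and>
     (\<forall>x\<in>E. \<forall>y\<in>E. (\<lambda>k. x k + y k) \<in> E) \<and>
     (\<forall>x\<in>E. \<forall>c::real. (\<lambda>k. c * x k) \<in> E) \<and>
     (\<forall>x\<in>E. N x \<ge> 0 \<and> (N x = 0 \<longleftrightarrow> x = (\<lambda>k. 0))) \<and>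
     (\<forall>x\<in>E. \<forall>c::real. N (\<lambda>k. c * x k) = \<bar>c\<bar> * N x) \<and>
     (\<forall>x\<in>E. \<forall>y\<in>E. N (\<lambda>k. x k + y k) \<le> N x + N y) \<and>
     (\<forall>x\<in>E. \<forall>y\<in>seqs. (\<forall>k. \<bar>y k\<bar> \<le> \<bar>x k\<bar>) \<longrightarrow> y \<in> E \<and> N y \<le> N x) \<and>
     (\<forall>u::nat \<Rightarrow> nat \<Rightarrow> real. (\<forall>m. u m \<in> E) \<and>
        (\<forall>\<epsilon>>0. \<exists>M. \<forall>m\<ge>M. \<forall>n\<ge>M. N (\<lambda>k. u m k - u n k) < \<epsilon>) \<longrightarrow>
        (\<exists>x\<in>E. (\<lambda>m. N (\<lambda>k. u m k - x k)) \<longlonglongrightarrow> 0))"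

definition decr_rearr :: "(nat \<Rightarrow> real) \<Rightarrow> nat \<Rightarrow> real" where
  "decr_rearr u n = Inf {s. s \<ge> 0 \<and> finite {k. k \<ge> 1 \<and> \<bar>u k\<bar> > s}
                              \<and> card {k. k \<ge> 1 \<and> \<bar>u k\<bar> > s} < n}"

definition bounded_seq :: "(nat \<Rightarrow> real) \<Rightarrow> bool" where
  "bounded_seq x \<longleftrightarrow> (\<exists>B. \<forall>k. \<bar>x k\<bar> \<le> B)"

definition has_fatou :: "(nat \<Rightarrow> real) set \<Rightarrow> ((nat \<Rightarrow> real) \<Rightarrow> real) \<Rightarrow> bool" where
  "has_fatou X N \<longleftrightarrow>
     (\<forall>u::nat \<Rightarrow> nat \<Rightarrow> real. \<forall>x\<in>seqs.
        (\<forall>m. u m \<in> X) \<and> (\<forall>m k. 0 \<le> u m k \<and> u m k \<le> u (Suc m) k) \<and>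
        (\<forall>k. (\<lambda>m. u m k) \<longlonglongrightarrow> x k) \<and> (\<exists>B. \<forall>m. N (u m) \<le> B) \<longrightarrow>
        x \<in> X \<and> N x = (SUP m. N (u m)))"

definition separable_sp :: "(nat \<Rightarrow> real) set \<Rightarrow> ((nat \<Rightarrow> real) \<Rightarrow> real) \<Rightarrow> bool" where
  "separable_sp X N \<longleftrightarrow>
     (\<exists>D. countable D \<and> D \<subseteq> X \<and>
        (\<forall>x\<in>X. \<forall>\<epsilon>>0. \<exists>d\<in>D. N (\<lambda>k. x k - d k) < \<epsilon>))"

definition is_symmetric_seq_space :: "(nat \<Rightarrow> real) set \<Rightarrow> ((nat \<Rightarrow> real) \<Rightarrow> real) \<Rightarrow> bool" where
  "is_symmetric_seq_space X N \<longleftrightarrow>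
     is_banach_seq_lattice X N \<and>
     (\<forall>x\<in>X. bounded_seq x) \<and>
     (\<forall>x\<in>X. \<forall>y\<in>seqs. bounded_seq y \<and> (\<forall>n\<ge>1. decr_rearr y n = decr_rearr x n)
          \<longrightarrow> y \<in> X \<and> N y = N x) \<and>
     (separable_sp X N \<or> has_fatou X N)"

definition shift :: "int \<Rightarrow> (nat \<Rightarrow> real) \<Rightarrow> nat \<Rightarrow> real" where
  "shift n x k = (if k \<ge> 1 \<and> int k - n \<ge> 1 then x (nat (int k - n)) else 0)"

definition op_bounded_on :: "(nat \<Rightarrow> real) set \<Rightarrow> ((nat \<Rightarrow> real) \<Rightarrow> real)
     \<Rightarrow> ((nat \<Rightarrow> real) \<Rightarrow> nat \<Rightarrow> real) \<Rightarrow> bool" where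
  "op_bounded_on E N T \<longleftrightarrow> (\<forall>x\<in>E. T x \<in> E) \<and> (\<exists>C. \<forall>x\<in>E. N (T x) \<le> C * N x)"

definition op_norm :: "(nat \<Rightarrow> real) set \<Rightarrow> ((nat \<Rightarrow> real) \<Rightarrow> real)
     \<Rightarrow> ((nat \<Rightarrow> real) \<Rightarrow> nat \<Rightarrow> real) \<Rightarrow> real" where
  "op_norm E N T = Sup {N (T x) | x. x \<in> E \<and> N x \<le> 1}"

definition k_minus :: "(nat \<Rightarrow> real) set \<Rightarrow> ((nat \<Rightarrow> real) \<Rightarrow> real) \<Rightarrow> real" where
  "k_minus E N = lim (\<lambda>n. root n (op_norm E N (shift (- int n))))"

definition dyadic_rearr :: "(nat \<Rightarrow> real) \<Rightarrow> nat \<Rightarrow> real" where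
  "dyadic_rearr a j = (if j \<ge> 1 then decr_rearr a (2 ^ (j - 1)) else 0)"

definition block_seq :: "(nat \<Rightarrow> real) \<Rightarrow> nat \<Rightarrow> real" where
  "block_seq a i = (\<Sum>k. a k * (if k \<ge> 1 \<and> 2 ^ (k - 1) \<le> i \<and> i \<le> 2 ^ k - 1 then 1 else 0))"

definition EX_set :: "(nat \<Rightarrow> real) set \<Rightarrow> (nat \<Rightarrow> real) set" where
  "EX_set X = {a \<in> seqs. block_seq a \<in> X}"

definition EX_norm :: "((nat \<Rightarrow> real) \<Rightarrow> real) \<Rightarrow> (nat \<Rightarrow> real) \<Rightarrow> real" where
  "EX_norm NX a = NX (block_seq a)"

end

theory Submission
  imports Defs "HOL-Library.Log_Nat"
begin

(* Let b be the block sequence of a, equal to a_k on the k-th dyadic block [2^(k-1), 2^k).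
   Its dyadic rearrangement b* has j-th entry b*_(2^(j-1)), which is at least |a_j| because b
   takes the value a_j at 2^(j-1) points, and at most sup_(i >= j) |a_i|. As E is a lattice,
   the lower bound gives ||a||_E <= ||b*||_E, and the upper bound gives ||b*||_E <= K ||a||_E as
   soon as the nonincreasing majorant k |-> sup_(i >= k) |a_i| is dominated by an element of E
   of norm at most K ||a||_E. This is where k_-(E) < 1 enters: some shift tau_(-M) has norm
   theta < 1, and with D = sum_(r<M) tau_(-r) |a| the series sum_q tau_(-qM) D converges
   geometrically in E and dominates that majorant. The hypotheses on X turn these bounds into
   ||b||_X ~ ||a||_E, i.e. E_X = E. *)

lemma floorlog_2_eq_iff:
  assumes "k \<ge> 1"
  shows "floorlog 2 i = k \<longleftrightarrow> 2 ^ (k - 1) \<le> i \<and> i < 2 ^ k"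
proof
  assume k: "floorlog 2 i = k"
  with assms have "floorlog 2 i \<noteq> 0" by simp
  then have "i > 0" by (simp add: floorlog_eq_zero_iff)
  with k show "2 ^ (k - 1) \<le> i \<and> i < 2 ^ k" using floorlog_bounds[of i 2] by simp
next
  assume "2 ^ (k - 1) \<le> i \<and> i < 2 ^ k"
  then show "floorlog 2 i = k"
    using floorlog_ge_SucI[of 2 "k - 1" i] floorlog_le_iff[of 2 i k] assms by auto
qed

lemma block_seq_eq: "i \<ge> 1 \<Longrightarrow> block_seq a i = a (floorlog 2 i)"
proof -
  assume "i \<ge> 1"
  have "i \<le> 2 ^ n - 1 \<longleftrightarrow> i < 2 ^ n" for n :: nat
    using one_le_power[of "2::nat" n] by linarith
  with \<open>i \<ge> 1\<close> have "(n \<ge> 1 \<and> 2 ^ (n - 1) \<le> i \<and> i \<le> 2 ^ n - 1) \<longleftrightarrow> n = floorlog 2 i" for n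
    using floorlog_2_eq_iff[of n i] floorlog_eq_zero_iff[of 2 i]
    by (cases "n = 0") auto
  then have "(\<lambda>n. a n * (if n \<ge> 1 \<and> 2 ^ (n - 1) \<le> i \<and> i \<le> 2 ^ n - 1 then 1 else 0))
      = (\<lambda>n. if n = floorlog 2 i then a n else 0)"
    by (auto simp: fun_eq_iff)
  then show ?thesis
    unfolding block_seq_def using sums_single[of "floorlog 2 i" a] sums_unique by metis
qed

lemma block_seq_0: "block_seq a 0 = 0"
  by (simp add: block_seq_def)

lemma le_floorlog_2: "1 \<le> j \<Longrightarrow> 2 ^ (j - 1) \<le> i \<Longrightarrow> j \<le> floorlog 2 i"
  using floorlog_ge_SucI[of 2 "j - 1" i] by simp

lemma decr_rearr_le:
  assumes "0 \<le> s" "1 \<le> n" "\<And>i. n \<le> i \<Longrightarrow> \<bar>b i\<bar> \<le> s"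
  shows "0 \<le> decr_rearr b n" and "decr_rearr b n \<le> s"
proof -
  let ?S = "{s. s \<ge> 0 \<and> finite {k. k \<ge> 1 \<and> \<bar>b k\<bar> > s} \<and> card {k. k \<ge> 1 \<and> \<bar>b k\<bar> > s} < n}"
  have sub: "{k. k \<ge> 1 \<and> \<bar>b k\<bar> > s} \<subseteq> {1..<n}"
    using assms(3) by (auto simp: not_le[symmetric])
  then have "card {k. k \<ge> 1 \<and> \<bar>b k\<bar> > s} < n"
    using assms(2) card_mono[OF _ sub] by fastforce
  then have "s \<in> ?S" using assms(1) finite_subset[OF sub] by blast
  moreover have "bdd_below ?S" by (rule bdd_belowI[of _ 0]) auto
  ultimately have "Inf ?S \<le> s" "0 \<le> Inf ?S" by (auto intro!: cInf_lower cInf_greatest)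
  then show "0 \<le> decr_rearr b n" "decr_rearr b n \<le> s" by (simp_all add: decr_rearr_def)
qed

lemma decr_rearr_ge:
  assumes "bounded_seq b" "1 \<le> n" "A \<subseteq> {1..}" "n \<le> card A" "\<And>i. i \<in> A \<Longrightarrow> v \<le> \<bar>b i\<bar>"
  shows "v \<le> decr_rearr b n"
proof -
  let ?S = "{s. s \<ge> 0 \<and> finite {k. k \<ge> 1 \<and> \<bar>b k\<bar> > s} \<and> card {k. k \<ge> 1 \<and> \<bar>b k\<bar> > s} < n}"
  obtain B where B: "\<And>k. \<bar>b k\<bar> \<le> B" using assms(1) by (auto simp: bounded_seq_def)
  then have empty: "{k. k \<ge> 1 \<and> \<bar>b k\<bar> > max B 0} = {}" by (auto simp: not_less)
  have in_S: "max B 0 \<in> ?S" unfolding mem_Collect_eq empty using assms(2) by simp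
  have lower: "v \<le> s" if s: "s \<in> ?S" for s
  proof (rule ccontr)
    assume "\<not> v \<le> s"
    then have "A \<subseteq> {k. k \<ge> 1 \<and> \<bar>b k\<bar> > s}" using assms(3,5) by force
    then have "card A \<le> card {k. k \<ge> 1 \<and> \<bar>b k\<bar> > s}" using s by (intro card_mono) auto
    then show False using s assms(4) by simp
  qed
  have "v \<le> Inf ?S" using cInf_greatest[of ?S v] in_S lower by blast
  then show ?thesis by (simp add: decr_rearr_def)
qed

definition tail_majorant :: "(nat \<Rightarrow> real) \<Rightarrow> (nat \<Rightarrow> real) \<Rightarrow> bool" where
  "tail_majorant x a \<longleftrightarrow> (\<forall>k\<ge>1. \<forall>i\<ge>k. \<bar>a i\<bar> \<le> x k)"

lemma tail_majorant_block_seq_bounded: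
  assumes "tail_majorant x a"
  shows "bounded_seq (block_seq a)"
proof -
  have "\<bar>block_seq a i\<bar> \<le> x 1" for i
  proof (cases "i = 0")
    case True
    then show ?thesis
      using assms order_trans[OF abs_ge_zero] by (fastforce simp: tail_majorant_def block_seq_0)
  next
    case False
    then have "1 \<le> floorlog 2 i" using le_floorlog_2[of 1 i] by simp
    then show ?thesis using assms False by (simp add: tail_majorant_def block_seq_eq)
  qed
  then show ?thesis by (auto simp: bounded_seq_def)
qed

lemma tail_majorant_dyadic_rearr_block_seq:
  assumes "tail_majorant x a"
  shows "\<bar>dyadic_rearr (block_seq a) j\<bar> \<le> \<bar>x j\<bar>"
proof (cases "j \<ge> 1")
  case True
  have "\<bar>block_seq a i\<bar> \<le> x j" if "2 ^ (j - 1) \<le> i" for i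
  proof -
    have "j \<le> floorlog 2 i" using True that by (rule le_floorlog_2)
    moreover have "i \<ge> 1" using that one_le_power[of "2::nat" "j - 1"] by linarith
    ultimately show ?thesis using assms True by (simp add: tail_majorant_def block_seq_eq)
  qed
  moreover have "0 \<le> x j"
    using assms True order_trans[OF abs_ge_zero] by (fastforce simp: tail_majorant_def)
  ultimately show ?thesis
    using decr_rearr_le[of "x j" "2 ^ (j - 1)" "block_seq a"] True by (simp add: dyadic_rearr_def)
qed (simp add: dyadic_rearr_def)

lemma abs_le_dyadic_rearr_block_seq:
  assumes "a \<in> seqs" "bounded_seq (block_seq a)"
  shows "\<bar>a j\<bar> \<le> \<bar>dyadic_rearr (block_seq a) j\<bar>"
proof (cases "j \<ge> 1")
  case True
  have "card {(2::nat) ^ (j - 1)..<2 ^ j} = 2 ^ (j - 1)"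
    using True by (cases j) auto
  moreover have "{2 ^ (j - 1)..<2 ^ j} \<subseteq> {1::nat..}"
  proof
    fix i assume "i \<in> {(2::nat) ^ (j - 1)..<2 ^ j}"
    then show "i \<in> {1..}"
      using one_le_power[of "2::nat" "j - 1"] by (simp only: atLeastLessThan_iff atLeast_iff) linarith
  qed
  moreover have "block_seq a i = a j" if "i \<in> {2 ^ (j - 1)..<2 ^ j}" for i
    using that True floorlog_2_eq_iff[of j i] calculation(2) by (auto simp: block_seq_eq)
  ultimately have "\<bar>a j\<bar> \<le> decr_rearr (block_seq a) (2 ^ (j - 1))"
    by (intro decr_rearr_ge[OF assms(2)]) auto
  then show ?thesis using True by (simp add: dyadic_rearr_def)
next
  case False
  then have "j = 0" by simp
  then show ?thesis using assms(1) by (simp add: seqs_def)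
qed

lemma dyadic_rearr_mem_seqs: "dyadic_rearr a \<in> seqs"
  by (simp add: seqs_def dyadic_rearr_def)

lemma block_seq_mem_seqs: "block_seq a \<in> seqs"
  by (simp add: seqs_def block_seq_0)

locale banach_seq_lattice =
  fixes E :: "(nat \<Rightarrow> real) set" and N :: "(nat \<Rightarrow> real) \<Rightarrow> real"
  assumes is_lattice: "is_banach_seq_lattice E N"
begin

lemma subset_seqs: "E \<subseteq> seqs"
  using is_lattice by (simp add: is_banach_seq_lattice_def)

lemma zero_mem: "(\<lambda>k. 0) \<in> E"
  using is_lattice by (simp add: is_banach_seq_lattice_def)

lemma add_mem: "x \<in> E \<Longrightarrow> y \<in> E \<Longrightarrow> (\<lambda>k. x k + y k) \<in> E"
  using is_lattice by (simp add: is_banach_seq_lattice_def)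

lemma scale_mem: "x \<in> E \<Longrightarrow> (\<lambda>k. c * x k) \<in> E"
  using is_lattice by (simp add: is_banach_seq_lattice_def)

lemma norm_nonneg: "x \<in> E \<Longrightarrow> 0 \<le> N x"
  using is_lattice by (simp add: is_banach_seq_lattice_def)

lemma norm_eq_zero_iff: "x \<in> E \<Longrightarrow> N x = 0 \<longleftrightarrow> x = (\<lambda>k. 0)"
  using is_lattice by (simp add: is_banach_seq_lattice_def)

lemma norm_scale: "x \<in> E \<Longrightarrow> N (\<lambda>k. c * x k) = \<bar>c\<bar> * N x"
  using is_lattice by (simp add: is_banach_seq_lattice_def)

lemma norm_triangle: "x \<in> E \<Longrightarrow> y \<in> E \<Longrightarrow> N (\<lambda>k. x k + y k) \<le> N x + N y"
  using is_lattice by (simp add: is_banach_seq_lattice_def)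

lemma solid:
  assumes "x \<in> E" "y \<in> seqs" "\<And>k. \<bar>y k\<bar> \<le> \<bar>x k\<bar>"
  shows "y \<in> E" and "N y \<le> N x"
  using is_lattice assms by (simp_all add: is_banach_seq_lattice_def)

lemma complete:
  assumes "\<And>m. u m \<in> E"
    and "\<And>\<epsilon>. \<epsilon> > 0 \<Longrightarrow> \<exists>M. \<forall>m\<ge>M. \<forall>n\<ge>M. N (\<lambda>k. u m k - u n k) < \<epsilon>"
  obtains x where "x \<in> E" "(\<lambda>m. N (\<lambda>k. u m k - x k)) \<longlonglongrightarrow> 0"
proof -
  have "\<forall>u. (\<forall>m. u m \<in> E) \<and> (\<forall>\<epsilon>>0. \<exists>M. \<forall>m\<ge>M. \<forall>n\<ge>M. N (\<lambda>k. u m k - u n k) < \<epsilon>)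
      \<longrightarrow> (\<exists>x\<in>E. (\<lambda>m. N (\<lambda>k. u m k - x k)) \<longlonglongrightarrow> 0)"
    using is_lattice by (simp add: is_banach_seq_lattice_def)
  then have "\<exists>x\<in>E. (\<lambda>m. N (\<lambda>k. u m k - x k)) \<longlonglongrightarrow> 0"
    using assms by blast
  with that show ?thesis by blast
qed

lemma norm_zero: "N (\<lambda>k. 0) = 0"
  using norm_eq_zero_iff zero_mem by blast

lemma diff_mem: "x \<in> E \<Longrightarrow> y \<in> E \<Longrightarrow> (\<lambda>k. x k - y k) \<in> E"
  using add_mem[of x "\<lambda>k. (-1) * y k"] scale_mem[of y "-1"] by simp

lemma norm_diff_commute: "x \<in> E \<Longrightarrow> y \<in> E \<Longrightarrow> N (\<lambda>k. x k - y k) = N (\<lambda>k. y k - x k)"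
  using norm_scale[OF diff_mem, of x y "-1"] by simp

lemma abs_mem: "x \<in> E \<Longrightarrow> (\<lambda>k. \<bar>x k\<bar>) \<in> E"
  and norm_abs: "x \<in> E \<Longrightarrow> N (\<lambda>k. \<bar>x k\<bar>) = N x"
proof -
  assume x: "x \<in> E"
  then have "(\<lambda>k. \<bar>x k\<bar>) \<in> seqs" using subset_seqs by (auto simp: seqs_def)
  with x show "(\<lambda>k. \<bar>x k\<bar>) \<in> E" by (rule solid) simp
  with x show "N (\<lambda>k. \<bar>x k\<bar>) = N x"
    using solid(2)[OF x] solid(2)[of "\<lambda>k. \<bar>x k\<bar>" x] subset_seqs by fastforce
qed

lemma sum_mem:
  "finite I \<Longrightarrow> (\<And>i. i \<in> I \<Longrightarrow> u i \<in> E) \<Longrightarrow> (\<lambda>k. \<Sum>i\<in>I. u i k) \<in> E"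
  by (induction I rule: finite_induct) (auto intro: zero_mem add_mem)

lemma norm_sum_le:
  "finite I \<Longrightarrow> (\<And>i. i \<in> I \<Longrightarrow> u i \<in> E) \<Longrightarrow> N (\<lambda>k. \<Sum>i\<in>I. u i k) \<le> (\<Sum>i\<in>I. N (u i))"
proof (induction I rule: finite_induct)
  case (insert i I)
  then have "N (\<lambda>k. \<Sum>j\<in>insert i I. u j k) \<le> N (u i) + N (\<lambda>k. \<Sum>j\<in>I. u j k)"
    using norm_triangle[of "u i"] sum_mem[of I u] by simp
  with insert show ?case by simp
qed (simp add: norm_zero)

lemma coordinate_bound:
  fixes k :: nat
  obtains c where "c \<ge> 0" "\<And>x. x \<in> E \<Longrightarrow> \<bar>x k\<bar> \<le> c * N x"
proof (cases "\<exists>y\<in>E. y k \<noteq> 0")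
  case False
  then show ?thesis using that[of 0] norm_nonneg by auto
next
  case True
  then obtain y where y: "y \<in> E" "y k \<noteq> 0" by blast
  define e where "e = (\<lambda>i. if i = k then (1::real) else 0)"
  have "y 0 = 0" using y(1) subset_seqs by (auto simp: seqs_def)
  with y(2) have "k \<noteq> 0" by (cases k) auto
  then have e_seq: "e \<in> seqs" by (simp add: seqs_def e_def)
  have e_mem: "e \<in> E"
    using scale_mem[OF y(1), of "1 / \<bar>y k\<bar>"] e_seq by (rule solid) (simp add: e_def y(2))
  have "e \<noteq> (\<lambda>k. 0)" by (metis e_def zero_neq_one)
  then have e_pos: "N e > 0" using norm_nonneg[OF e_mem] norm_eq_zero_iff[OF e_mem] by linarith
  have "\<bar>x k\<bar> \<le> (1 / N e) * N x" if x: "x \<in> E" for x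
  proof -
    have "\<bar>x k\<bar> * N e = N (\<lambda>i. \<bar>x k\<bar> * e i)" using norm_scale[OF e_mem] by simp
    also have "\<dots> \<le> N x" using x by (rule solid) (use e_seq in \<open>auto simp: seqs_def e_def\<close>)
    finally show ?thesis using e_pos by (simp add: field_simps)
  qed
  then show ?thesis using that[of "1 / N e"] e_pos by simp
qed

lemma tendsto_coordinate:
  assumes "\<And>m. y m \<in> E" "x \<in> E" "(\<lambda>m. N (\<lambda>k. y m k - x k)) \<longlonglongrightarrow> 0"
  shows "(\<lambda>m. y m k) \<longlonglongrightarrow> x k"
proof -
  obtain c where c: "c \<ge> 0" "\<And>z. z \<in> E \<Longrightarrow> \<bar>z k\<bar> \<le> c * N z"
    using coordinate_bound[where k = k] by blast
  have "norm (y m k - x k) \<le> norm (N (\<lambda>k. y m k - x k)) * c" for m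
    using c(2)[OF diff_mem[OF assms(1,2)]] norm_nonneg[OF diff_mem[OF assms(1,2)]]
    by (simp add: mult.commute)
  then have "(\<lambda>m. y m k - x k) \<longlonglongrightarrow> 0"
    by (intro tendsto_0_le[OF assms(3)] always_eventually allI)
  then show ?thesis by (simp add: LIM_zero_cancel)
qed

lemma norm_summable_series_converges:
  assumes u_mem: "\<And>q. u q \<in> E" and summable: "summable (\<lambda>q. N (u q))"
  obtains x where "x \<in> E" "(\<lambda>m. N (\<lambda>k. (\<Sum>q<m. u q k) - x k)) \<longlonglongrightarrow> 0"
proof -
  define P where "P m = (\<lambda>k. \<Sum>q<m. u q k)" for m
  define S where "S m = (\<Sum>q<m. N (u q))" for m
  have P_mem: "P m \<in> E" for m unfolding P_def by (rule sum_mem) (auto intro: u_mem)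
  have P_diff: "N (\<lambda>k. P m k - P n k) \<le> S m - S n" if "n \<le> m" for m n
  proof -
    have "N (\<lambda>k. P m k - P n k) = N (\<lambda>k. \<Sum>q\<in>{n..<m}. u q k)"
      using that by (simp add: P_def lessThan_atLeast0 sum_diff_nat_ivl)
    also have "\<dots> \<le> (\<Sum>q\<in>{n..<m}. N (u q))" by (rule norm_sum_le) (auto intro: u_mem)
    also have "\<dots> = S m - S n" using that by (simp add: S_def lessThan_atLeast0 sum_diff_nat_ivl)
    finally show ?thesis .
  qed
  have "Cauchy S"
    using summable unfolding S_def[abs_def]
    by (simp add: Cauchy_convergent_iff summable_iff_convergent)
  have "\<exists>M. \<forall>m\<ge>M. \<forall>n\<ge>M. N (\<lambda>k. P m k - P n k) < \<epsilon>" if "\<epsilon> > 0" for \<epsilon>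
  proof -
    obtain M where M: "\<And>m n. m \<ge> M \<Longrightarrow> n \<ge> M \<Longrightarrow> norm (S m - S n) < \<epsilon>"
      using CauchyD[OF \<open>Cauchy S\<close> \<open>\<epsilon> > 0\<close>] by blast
    have "N (\<lambda>k. P m k - P n k) < \<epsilon>" if "m \<ge> M" "n \<ge> M" for m n
    proof (cases "n \<le> m")
      case True
      then show ?thesis using P_diff[OF True] M[OF that] by simp
    next
      case False
      then show ?thesis using P_diff[of m n] M[OF that] norm_diff_commute[OF P_mem P_mem] by simp
    qed
    then show ?thesis by blast
  qed
  with complete[of P, OF P_mem] that show ?thesis unfolding P_def by blast
qed

lemma nonneg_series_majorant:
  assumes u_mem: "\<And>q. u q \<in> E" and u_nonneg: "\<And>q k. 0 \<le> u q k"
    and summable: "summable (\<lambda>q. N (u q))"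
  obtains x where "x \<in> E" "N x \<le> (\<Sum>q. N (u q))" "\<And>m k. (\<Sum>q<m. u q k) \<le> x k"
proof -
  define P where "P m = (\<lambda>k. \<Sum>q<m. u q k)" for m
  have P_mem: "P m \<in> E" for m unfolding P_def by (rule sum_mem) (auto intro: u_mem)
  obtain x where x: "x \<in> E" and lim: "(\<lambda>m. N (\<lambda>k. P m k - x k)) \<longlonglongrightarrow> 0"
    using norm_summable_series_converges[OF u_mem summable] unfolding P_def by blast
  have P_le: "P m k \<le> x k" for m k
  proof -
    have "incseq (\<lambda>m. P m k)" by (rule incseq_SucI) (simp add: P_def u_nonneg)
    moreover have "(\<lambda>m. P m k) \<longlonglongrightarrow> x k" using P_mem x lim by (rule tendsto_coordinate)
    ultimately show ?thesis by (rule incseq_le)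
  qed
  have "N x - (\<Sum>q. N (u q)) \<le> N (\<lambda>k. P m k - x k)" for m
  proof -
    have "N (P m) \<le> (\<Sum>q<m. N (u q))" unfolding P_def by (rule norm_sum_le) (auto intro: u_mem)
    also have "\<dots> \<le> (\<Sum>q. N (u q))"
      using summable by (rule sum_le_suminf) (auto intro: norm_nonneg u_mem)
    finally have "N (P m) \<le> (\<Sum>q. N (u q))" .
    moreover have "N x \<le> N (P m) + N (\<lambda>k. x k - P m k)"
      using norm_triangle[OF P_mem[of m] diff_mem[OF x P_mem[of m]]] by simp
    ultimately show ?thesis using norm_diff_commute[OF x P_mem] by simp
  qed
  then have "N x - (\<Sum>q. N (u q)) \<le> 0" by (intro LIMSEQ_le_const[OF lim]) auto
  with that x P_le show ?thesis unfolding P_def by simp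
qed

lemma mem_if_dyadic_rearr_block_seq_mem:
  assumes "a \<in> seqs" "bounded_seq (block_seq a)" "dyadic_rearr (block_seq a) \<in> E"
  shows "a \<in> E" and "N a \<le> N (dyadic_rearr (block_seq a))"
  using solid[OF assms(3,1) abs_le_dyadic_rearr_block_seq[OF assms(1,2)]] by blast+

end

lemma subadditive_le_mult_add:
  fixes b :: "nat \<Rightarrow> real"
  assumes nonneg: "\<And>n. 0 \<le> b n" and sub: "\<And>m n. b (m + n) \<le> b m + b n" and "s < m"
  shows "b (q * m + s) \<le> real q * b m + (\<Sum>r<m. b r)"
proof (induction q)
  case 0
  show ?case using \<open>s < m\<close> nonneg by (simp add: member_le_sum)
next
  case (Suc q)
  have "b (Suc q * m + s) \<le> b m + b (q * m + s)"
    using sub[of m "q * m + s"] by (simp add: add.assoc)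
  with Suc show ?case by (simp add: algebra_simps)
qed

lemma subadditive_div_convergent:
  fixes b :: "nat \<Rightarrow> real"
  assumes nonneg: "\<And>n. 0 \<le> b n" and sub: "\<And>m n. b (m + n) \<le> b m + b n"
  shows "convergent (\<lambda>n. b n / real n)"
proof -
  define L where "L = Inf {b n / real n | n. n \<ge> 1}"
  have bdd: "bdd_below {b n / real n | n. n \<ge> 1}"
    using nonneg by (intro bdd_belowI[of _ 0]) auto
  have L_le: "L \<le> b n / real n" if "n \<ge> 1" for n
    unfolding L_def using that by (intro cInf_lower[OF _ bdd]) auto
  have "(\<lambda>n. b n / real n) \<longlonglongrightarrow> L"
  proof (rule LIMSEQ_I)
    fix r :: real assume r: "r > 0"
    have "Inf {b n / real n | n. n \<ge> 1} < L + r / 2" using r by (simp add: L_def)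
    then obtain m where m: "m \<ge> 1" "b m / real m < L + r / 2"
      by (subst (asm) cInf_less_iff[OF _ bdd]) auto
    define B where "B = (\<Sum>r<m. b r)"
    obtain n0 :: nat where n0: "2 * B / r < real n0" using reals_Archimedean2 by blast
    have "norm (b n / real n - L) < r" if n: "n \<ge> max n0 1" for n
    proof -
      have pos: "real n > 0" using n by simp
      have "b n \<le> real (n div m) * b m + B"
        using subadditive_le_mult_add[OF nonneg sub, of "n mod m" m "n div m"] m(1)
        by (simp add: B_def)
      also have "\<dots> \<le> real n / real m * b m + B"
        using nonneg[of m] by (intro add_right_mono mult_right_mono of_nat_div_le_of_nat) auto
      finally have "b n / real n \<le> b m / real m + B / real n"
        using pos m(1) by (simp add: field_simps)
      moreover have "2 * B / r < real n"
        using n0 n by (simp add: order_less_le_trans)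
      then have "B / real n < r / 2"
        using r pos by (simp add: field_simps)
      ultimately have "b n / real n < L + r" using m(2) by linarith
      then show ?thesis using L_le[of n] n by simp
    qed
    then show "\<exists>no. \<forall>n\<ge>no. norm (b n / real n - L) < r" by blast
  qed
  then show ?thesis by (rule convergentI)
qed

lemma shift_neg_int: "shift (- int n) x k = (if k \<ge> 1 then x (k + n) else 0)"
  by (auto simp: shift_def nat_add_distrib)

lemma shift_shift_neg_int: "shift (- int m) (shift (- int n) x) = shift (- int (m + n)) x"
  unfolding fun_eq_iff shift_neg_int by (simp add: ac_simps)

lemma shift_0: "x \<in> seqs \<Longrightarrow> shift 0 x = x"
  using shift_neg_int[of 0 x] by (auto simp: fun_eq_iff seqs_def not_less_eq_eq)

lemma shift_scale: "shift n (\<lambda>k. c * x k) = (\<lambda>k. c * shift n x k)"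
  by (simp add: shift_def fun_eq_iff)

lemma shift_zero_fun: "shift n (\<lambda>k. 0) = (\<lambda>k. 0)"
  by (simp add: shift_def fun_eq_iff)

lemma tail_majorant_if_partial_sums_le:
  fixes a x :: "nat \<Rightarrow> real" and M :: nat
  defines "D \<equiv> \<lambda>k. \<Sum>r<M. shift (- int r) (\<lambda>i. \<bar>a i\<bar>) k"
  assumes "M \<ge> 1" and partial: "\<And>m k. (\<Sum>q<m. shift (- int (q * M)) D k) \<le> x k"
  shows "tail_majorant x a"
  unfolding tail_majorant_def
proof (intro allI impI)
  fix k i :: nat assume ki: "k \<ge> 1" "i \<ge> k"
  have u_eq: "shift (- int (q * M)) D k = (\<Sum>r<M. \<bar>a (k + q * M + r)\<bar>)" for q
    unfolding D_def shift_neg_int using ki by (simp add: add.assoc)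
  have D_nonneg: "0 \<le> shift n D k" for n
    by (simp add: D_def shift_def sum_nonneg)
  define q where "q = (i - k) div M"
  have i: "i = k + q * M + (i - k) mod M" using ki by (simp add: q_def)
  have "\<bar>a (k + q * M + (i - k) mod M)\<bar> \<le> (\<Sum>r<M. \<bar>a (k + q * M + r)\<bar>)"
    using \<open>M \<ge> 1\<close> by (intro member_le_sum) auto
  then have "\<bar>a i\<bar> \<le> shift (- int (q * M)) D k" using i u_eq by simp
  also have "\<dots> \<le> (\<Sum>q'<Suc q. shift (- int (q' * M)) D k)"
    using D_nonneg by (intro member_le_sum) auto
  also have "\<dots> \<le> x k" by (rule partial)
  finally show "\<bar>a i\<bar> \<le> x k" .
qed

locale shift_bounded_lattice = banach_seq_lattice +
  assumes shift_bounded: "\<And>n. op_bounded_on E N (shift n)"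
begin

abbreviation shift_norm :: "int \<Rightarrow> real" where
  "shift_norm n \<equiv> op_norm E N (shift n)"

lemma shift_mem: "x \<in> E \<Longrightarrow> shift n x \<in> E"
  using shift_bounded[of n] by (simp add: op_bounded_on_def)

lemma shift_norm_nonneg: "0 \<le> shift_norm n"
  and norm_shift_le: "x \<in> E \<Longrightarrow> N (shift n x) \<le> shift_norm n * N x"
proof -
  define A where "A = {N (shift n y) | y. y \<in> E \<and> N y \<le> 1}"
  have op_norm_eq: "shift_norm n = Sup A" by (simp add: op_norm_def A_def)
  obtain C where C: "\<And>y. y \<in> E \<Longrightarrow> N (shift n y) \<le> C * N y"
    using shift_bounded[of n] by (auto simp: op_bounded_on_def)
  have "bdd_above A"
  proof (rule bdd_aboveI)
    fix v assume "v \<in> A"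
    then obtain y where y: "y \<in> E" "N y \<le> 1" "v = N (shift n y)" by (auto simp: A_def)
    then have "v \<le> \<bar>C\<bar> * N y"
      using C[OF y(1)] mult_right_mono[OF abs_ge_self[of C] norm_nonneg[OF y(1)]] by linarith
    also have "\<dots> \<le> \<bar>C\<bar>" using y(2) norm_nonneg[OF y(1)] by (simp add: mult_left_le)
    finally show "v \<le> \<bar>C\<bar>" .
  qed
  have in_A: "N (shift n y) \<le> shift_norm n" if "y \<in> E" "N y \<le> 1" for y
    unfolding op_norm_eq using that by (intro cSup_upper \<open>bdd_above A\<close>) (auto simp: A_def)
  show nonneg: "0 \<le> shift_norm n"
    using in_A[OF zero_mem] by (simp add: shift_zero_fun norm_zero)
  assume x: "x \<in> E"
  show "N (shift n x) \<le> shift_norm n * N x"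
  proof (cases "N x = 0")
    case True
    then show ?thesis using x by (simp add: norm_eq_zero_iff shift_zero_fun norm_zero)
  next
    case False
    then have pos: "N x > 0" using norm_nonneg[OF x] by simp
    have "(1 / N x) * N (shift n x) = N (shift n (\<lambda>k. (1 / N x) * x k))"
      unfolding shift_scale using norm_scale[OF shift_mem[OF x], of "1 / N x"] pos by simp
    also have "\<dots> \<le> shift_norm n"
      using norm_scale[OF x, of "1 / N x"] pos by (intro in_A scale_mem x) simp
    finally show ?thesis using pos by (simp add: field_simps)
  qed
qed

lemma shift_norm_neg_add_le:
  "shift_norm (- int (m + n)) \<le> shift_norm (- int m) * shift_norm (- int n)"
  unfolding op_norm_def[of E N "shift (- int (m + n))"]
proof (rule cSup_least)
  show "{N (shift (- int (m + n)) y) | y. y \<in> E \<and> N y \<le> 1} \<noteq> {}"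
    using zero_mem norm_zero by fastforce
next
  fix v assume "v \<in> {N (shift (- int (m + n)) y) | y. y \<in> E \<and> N y \<le> 1}"
  then obtain y where y: "y \<in> E" "N y \<le> 1" and v: "v = N (shift (- int m) (shift (- int n) y))"
    by (auto simp: shift_shift_neg_int)
  have "v \<le> shift_norm (- int m) * N (shift (- int n) y)"
    unfolding v by (rule norm_shift_le[OF shift_mem[OF y(1)]])
  also have "\<dots> \<le> shift_norm (- int m) * (shift_norm (- int n) * N y)"
    by (intro mult_left_mono norm_shift_le y(1) shift_norm_nonneg)
  also have "\<dots> \<le> shift_norm (- int m) * shift_norm (- int n)"
    using y norm_nonneg[OF y(1)] by (intro mult_left_mono mult_left_le shift_norm_nonneg)
  finally show "v \<le> shift_norm (- int m) * shift_norm (- int n)" .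
qed

lemma norm_shift_neg_mult_le:
  assumes "y \<in> E"
  shows "N (shift (- int (q * M)) y) \<le> shift_norm (- int M) ^ q * N y"
proof (induction q)
  case 0
  show ?case using assms subset_seqs by (auto simp: shift_0)
next
  case (Suc q)
  have "N (shift (- int (Suc q * M)) y) = N (shift (- int M) (shift (- int (q * M)) y))"
    unfolding shift_shift_neg_int by simp
  also have "\<dots> \<le> shift_norm (- int M) * N (shift (- int (q * M)) y)"
    by (rule norm_shift_le[OF shift_mem[OF assms]])
  also have "\<dots> \<le> shift_norm (- int M) * (shift_norm (- int M) ^ q * N y)"
    using Suc by (intro mult_left_mono shift_norm_nonneg)
  finally show ?case by simp
qed

lemma exists_contracting_shift:
  assumes "k_minus E N < 1"
  obtains M where "M \<ge> 1" "shift_norm (- int M) < 1"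
proof (rule ccontr)
  \<comment> \<open>Otherwise the logarithms of the shift norms are nonnegative and subadditive, so by
    Fekete's lemma the limit defining k_minus exists and is at least 1.\<close>
  assume "\<not> thesis"
  with that have ge1: "1 \<le> shift_norm (- int n)" if "n \<ge> 1" for n
    using that by (meson not_less)
  define b where "b n = (if n = 0 then 0 else ln (shift_norm (- int n)))" for n
  have b_nonneg: "0 \<le> b n" for n using ge1[of n] by (simp add: b_def)
  have "b (m + n) \<le> b m + b n" for m n
  proof (cases "m = 0 \<or> n = 0")
    case False
    then have "ln (shift_norm (- int (m + n))) \<le> ln (shift_norm (- int m) * shift_norm (- int n))"
      using ge1[of "m + n"] by (intro ln_mono shift_norm_neg_add_le) auto
    also have "\<dots> = ln (shift_norm (- int m)) + ln (shift_norm (- int n))"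
      using ge1[of m] ge1[of n] False by (simp add: ln_mult)
    finally show ?thesis using False by (simp add: b_def)
  qed (auto simp: b_def)
  then obtain l where l: "(\<lambda>n. b n / real n) \<longlonglongrightarrow> l"
    using subadditive_div_convergent[of b] b_nonneg by (auto simp: convergent_def)
  have "0 \<le> l" using b_nonneg by (intro LIMSEQ_le_const[OF l]) auto
  have "\<forall>\<^sub>F n in sequentially. exp (b n / real n) = root n (shift_norm (- int n))"
  proof (rule eventually_sequentiallyI)
    fix n :: nat assume "n \<ge> 1"
    then show "exp (b n / real n) = root n (shift_norm (- int n))"
      using ge1[of n] by (simp add: b_def root_powr_inverse powr_def)
  qed
  then have "(\<lambda>n. root n (shift_norm (- int n))) \<longlonglongrightarrow> exp l"
    by (rule Lim_transform_eventually[OF tendsto_exp[OF l]])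
  then have "k_minus E N = exp l" unfolding k_minus_def by (rule limI)
  with \<open>0 \<le> l\<close> assms show False by simp
qed

lemma tail_majorant_norm_le:
  assumes a: "a \<in> E" and M: "M \<ge> 1" "shift_norm (- int M) < 1"
  defines "\<theta> \<equiv> shift_norm (- int M)" and "K0 \<equiv> \<Sum>r<M. shift_norm (- int r)"
  shows "\<exists>x\<in>E. N x \<le> K0 / (1 - \<theta>) * N a \<and> tail_majorant x a"
proof -
  have \<theta>: "0 \<le> \<theta>" "\<theta> < 1" using M(2) shift_norm_nonneg by (auto simp: \<theta>_def)
  define D where "D = (\<lambda>k. \<Sum>r<M. shift (- int r) (\<lambda>i. \<bar>a i\<bar>) k)"
  have D_mem: "D \<in> E" unfolding D_def by (intro sum_mem shift_mem abs_mem a) simp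
  have "N D \<le> (\<Sum>r<M. N (shift (- int r) (\<lambda>i. \<bar>a i\<bar>)))"
    unfolding D_def by (intro norm_sum_le shift_mem abs_mem a) simp
  also have "\<dots> \<le> (\<Sum>r<M. shift_norm (- int r) * N a)"
    using norm_shift_le[OF abs_mem[OF a]] by (intro sum_mono) (simp add: norm_abs[OF a])
  finally have N_D: "N D \<le> K0 * N a" by (simp add: K0_def sum_distrib_right)
  define u where "u q = shift (- int (q * M)) D" for q
  have u_mem: "u q \<in> E" for q unfolding u_def by (rule shift_mem[OF D_mem])
  have u_nonneg: "0 \<le> u q k" for q k
    by (simp add: u_def D_def shift_def sum_nonneg)
  have u_le: "N (u q) \<le> \<theta> ^ q * N D" for q
    unfolding u_def \<theta>_def by (rule norm_shift_neg_mult_le[OF D_mem])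
  have geometric: "(\<lambda>q. \<theta> ^ q * N D) sums (N D / (1 - \<theta>))"
    using sums_mult2[OF geometric_sums, of \<theta> "N D"] \<theta> by simp
  have summable: "summable (\<lambda>q. N (u q))"
  proof (rule summable_comparison_test)
    show "\<exists>n0. \<forall>q\<ge>n0. norm (N (u q)) \<le> \<theta> ^ q * N D"
      using u_le norm_nonneg[OF u_mem] by auto
    show "summable (\<lambda>q. \<theta> ^ q * N D)" using geometric by (rule sums_summable)
  qed
  obtain x where x: "x \<in> E" "N x \<le> (\<Sum>q. N (u q))"
    and partial: "\<And>m k. (\<Sum>q<m. u q k) \<le> x k"
    using nonneg_series_majorant[OF u_mem u_nonneg summable] by blast
  have "(\<Sum>q. N (u q)) \<le> N D / (1 - \<theta>)"
    using suminf_le[OF u_le summable] geometric by (simp add: sums_iff)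
  also have "\<dots> \<le> K0 / (1 - \<theta>) * N a" using N_D \<theta> by (simp add: divide_right_mono)
  finally have "N x \<le> K0 / (1 - \<theta>) * N a" using x(2) by linarith
  moreover have "tail_majorant x a"
    using M(1) partial unfolding u_def D_def by (rule tail_majorant_if_partial_sums_le)
  ultimately show ?thesis using x(1) by blast
qed

lemma exists_tail_majorant:
  assumes "k_minus E N < 1"
  obtains K where "K \<ge> 0" "\<And>a. a \<in> E \<Longrightarrow> \<exists>x\<in>E. N x \<le> K * N a \<and> tail_majorant x a"
proof -
  obtain M where M: "M \<ge> 1" "shift_norm (- int M) < 1"
    using exists_contracting_shift[OF assms] by blast
  have "(\<Sum>r<M. shift_norm (- int r)) / (1 - shift_norm (- int M)) \<ge> 0"
    using M(2) by (intro divide_nonneg_nonneg sum_nonneg shift_norm_nonneg) simp_all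
  with tail_majorant_norm_le[OF _ M] that show ?thesis by blast
qed

lemma dyadic_rearr_block_seq_bound:
  assumes "k_minus E N < 1"
  obtains K where "K \<ge> 0"
    "\<And>a. a \<in> E \<Longrightarrow> bounded_seq (block_seq a) \<and> dyadic_rearr (block_seq a) \<in> E
       \<and> N (dyadic_rearr (block_seq a)) \<le> K * N a"
proof -
  obtain K where K: "K \<ge> 0" "\<And>a. a \<in> E \<Longrightarrow> \<exists>x\<in>E. N x \<le> K * N a \<and> tail_majorant x a"
    using exists_tail_majorant[OF assms] by blast
  have "bounded_seq (block_seq a) \<and> dyadic_rearr (block_seq a) \<in> E
      \<and> N (dyadic_rearr (block_seq a)) \<le> K * N a" if a: "a \<in> E" for a
  proof -
    obtain x where x: "x \<in> E" "N x \<le> K * N a" "tail_majorant x a" using K(2)[OF a] by blast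
    show ?thesis
      using solid[OF x(1) dyadic_rearr_mem_seqs tail_majorant_dyadic_rearr_block_seq[OF x(3)]]
        tail_majorant_block_seq_bounded[OF x(3)] x(2) by auto
  qed
  with K(1) that show ?thesis by blast
qed

end

theorem proposition4p2:
  fixes E X :: "(nat \<Rightarrow> real) set"
    and NE NX :: "(nat \<Rightarrow> real) \<Rightarrow> real"
  assumes E_lat: "is_banach_seq_lattice E NE"
    and shifts: "\<forall>n::int. op_bounded_on E NE (shift n)"
    and kminus: "k_minus E NE < 1"
    and X_sym: "is_symmetric_seq_space X NX"
    and X_char: "\<forall>a\<in>seqs. a \<in> X \<longleftrightarrow> bounded_seq a \<and> dyadic_rearr a \<in> E"
    and X_norm: "\<exists>c C. 0 < c \<and> 0 < C \<and>
                   (\<forall>a\<in>X. c * NX a \<le> NE (dyadic_rearr a) \<and> NE (dyadic_rearr a) \<le> C * NX a)"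
  shows "EX_set X = E \<and>
         (\<exists>c C. 0 < c \<and> 0 < C \<and>
            (\<forall>a\<in>E. c * NE a \<le> EX_norm NX a \<and> EX_norm NX a \<le> C * NE a))"
proof -
  interpret E: shift_bounded_lattice E NE
    using E_lat shifts by unfold_locales auto
  obtain c C where c: "0 < c" and C: "0 < C"
    and cC: "\<And>a. a \<in> X \<Longrightarrow> c * NX a \<le> NE (dyadic_rearr a) \<and> NE (dyadic_rearr a) \<le> C * NX a"
    using X_norm by blast
  obtain K where K: "K \<ge> 0" "\<And>a. a \<in> E \<Longrightarrow> bounded_seq (block_seq a)
      \<and> dyadic_rearr (block_seq a) \<in> E \<and> NE (dyadic_rearr (block_seq a)) \<le> K * NE a"
    using E.dyadic_rearr_block_seq_bound[OF kminus] by blast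
  have "EX_set X = E"
    using X_char K(2) E.mem_if_dyadic_rearr_block_seq_mem E.subset_seqs block_seq_mem_seqs
    by (auto simp: EX_set_def)
  moreover have "1 / C * NE a \<le> EX_norm NX a \<and> EX_norm NX a \<le> (K / c + 1) * NE a"
    if a: "a \<in> E" for a
  proof -
    have "block_seq a \<in> X" using X_char K(2)[OF a] block_seq_mem_seqs by blast
    then have "1 / C * NE a \<le> EX_norm NX a \<and> EX_norm NX a \<le> K / c * NE a"
      using K(2)[OF a] E.mem_if_dyadic_rearr_block_seq_mem(2)[of a] cC[of "block_seq a"]
        c C E.subset_seqs a by (auto simp: EX_norm_def field_simps)
    moreover have "K / c * NE a \<le> (K / c + 1) * NE a"
      using E.norm_nonneg[OF a] by (simp add: distrib_right)
    ultimately show ?thesis by linarith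
  qed
  moreover have "0 < K / c + 1" using K(1) c by (simp add: add_nonneg_pos)
  ultimately show ?thesis using C by (intro conjI exI[of _ "1 / C"] exI[of _ "K / c + 1"]) auto
qed

end
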